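(* Let $\mathcal{X}\in\mathbb{K}_l^{m\times n}$ and $\mathcal{Y}\in\mathbb{K}_l^{n\times p}$ be fixed tubal matrices, let $\tau\ge 1$, and let $\mathcal{S}\in\mathbb{K}_l^{n\times\tau}$, $\mathcal{D}\in\mathbb{K}_l^{\tau\times\tau}$ be the random sampling and rescaling tubal matrices generated from a probability distribution $\{\pi_i\}_{i=1}^n$ (with $\pi_i>0$) as described in the context. Suppose that for some $\beta\in(0,1]$ either $$\pi_i\ \ge\ \beta\,\frac{\|\mathcal{X}_{(:,i,:)}\|_F\,\|\mathcal{Y}_{(i,:,:)}\|_F}{\sum_{j=1}^n\|\mathcal{X}_{(:,j,:)}\|_F\,\|\mathcal{Y}_{(j,:,:)}\|_F}\quad\text{for all } i\in[n],$$ or $$\pi_i\ \ge\ \beta\,\frac{\|\mathcal{X}_{(:,i,:)}\|_F^2}{\|\mathcal{X}\|_F^2}\quad\text{for all } i\in[n].$$ Then $$\mathbf{E}\big[\|\mathcal{X}*\mathcal{Y}-\mathcal{X}*\mathcal{S}*\mathcal{D}*\mathcal{D}*\mathcal{S}^{T}*\mathcal{Y}\|_F^2\big]\ \le\ \frac{l}{\beta\tau}\,\|\mathcal{X}\|_F^2\,\|\mathcal{Y}\|_F^2 .$$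
   Context: $\mathbb{K}_l^{n\times p}$ denotes $\mathbb{R}^{n\times p\times l}$ (third-order tensors, called tubal matrices); $\mathcal{X}_{(k)}=\mathcal{X}_{(:,:,k)}$ is the $k$-th frontal slice, and Matlab-style indexing is used for fibers and slices (e.g. $\mathcal{X}_{(:,i,:)}$ is the $i$-th lateral slice, $\mathcal{Y}_{(i,:,:)}$ the $i$-th horizontal slice). The t-product of $\mathcal{A}\in\mathbb{K}_l^{n\times p}$ and $\mathcal{B}\in\mathbb{K}_l^{p\times r}$ is $\mathcal{A}*\mathcal{B}=\mathrm{fold}(\mathrm{bcirc}(\mathcal{A})\,\mathrm{unfold}(\mathcal{B}))\in\mathbb{K}_l^{n\times r}$, where $\mathrm{bcirc}(\mathcal{A})$ is the $nl\times pl$ block-circulant matrix whose first block column is $(\mathcal{A}_{(1)};\mathcal{A}_{(2)};\dots;\mathcal{A}_{(l)})$ (block $(i,j)$ equals $\mathcal{A}_{((i-j \bmod l)+1)}$), $\mathrm{unfold}(\mathcal{B})=(\mathcal{B}_{(1)};\dots;\mathcal{B}_{(l)})$ stacked vertically, and $\mathrm{fold}$ inverts $\mathrm{unfold}$. The transpose $\mathcal{A}^T\in\mathbb{K}_l^{p\times n}$ has $(\mathcal{A}^T)_{(1)}=\mathcal{A}_{(1)}^T$ and $(\mathcal{A}^T)_{(k)}=\mathcal{A}_{(l-k+2)}^T$ for $k=2,\dots,l$. $\|\cdot\|_F$ is the square root of the sum of squares of all entries. Sampling construction: given a probability distribution $\{\pi_i\}_{i=1}^n$ on $[n]=\{1,\dots,n\}$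 and an integer $\tau$, draw indices $i_1,\dots,i_\tau\in[n]$ independently with $\mathbf{P}(i_t=i)=\pi_i$ (sampling with replacement); $\mathcal{S}\in\mathbb{K}_l^{n\times\tau}$ has $\mathcal{S}_{(i_t,t,1)}=1$ for $t=1,\dots,\tau$ and all other entries zero; $\mathcal{D}\in\mathbb{K}_l^{\tau\times\tau}$ has $\mathcal{D}_{(t,t,1)}=1/\sqrt{\tau\pi_{i_t}}$ for $t=1,\dots,\tau$ and all other entries zero. *)

theory Defs
  imports Complex_Main "HOL-Library.FuncSet"
begin

text \<open>Tubal matrices in K_l^{a x b} are represented as functions
  nat => nat => nat => real, with 0-based indices (row, column, frontal slice);
  only entries with row < a, column < b, slice < l are meaningful.\<close>

type_synonym tensor = "nat \<Rightarrow> nat \<Rightarrow> nat \<Rightarrow> real"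

text \<open>t-product of A (a x q x l) and B (q x r x l): the k-th frontal slice of
  fold(bcirc(A) unfold(B)) is sum over s of A_((k-s) mod l) B_s.\<close>
definition tprod :: "nat \<Rightarrow> nat \<Rightarrow> tensor \<Rightarrow> tensor \<Rightarrow> tensor" where
  "tprod l q A B = (\<lambda>i j k. \<Sum>c<q. \<Sum>s<l. A i c ((k + l - s) mod l) * B c j s)"

text \<open>t-transpose: slice 1 transposed, slices 2..l transposed and reversed.\<close>
definition ttrans :: "nat \<Rightarrow> tensor \<Rightarrow> tensor" where
  "ttrans l A = (\<lambda>i j k. A j i ((l - k) mod l))"

definition fro_sq :: "nat \<Rightarrow> nat \<Rightarrow> nat \<Rightarrow> tensor \<Rightarrow> real" where
  "fro_sq a b l A = (\<Sum>i<a. \<Sum>j<b. \<Sum>k<l. (A i j k)^2)"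

definition fro :: "nat \<Rightarrow> nat \<Rightarrow> nat \<Rightarrow> tensor \<Rightarrow> real" where
  "fro a b l A = sqrt (fro_sq a b l A)"

text \<open>lateral slice X(:,i,:) of an a x b x l tensor (a x 1 x l) and
  horizontal slice Y(i,:,:) (1 x b x l).\<close>
definition lat_slice :: "tensor \<Rightarrow> nat \<Rightarrow> tensor" where
  "lat_slice X i = (\<lambda>r c k. X r i k)"

definition hor_slice :: "tensor \<Rightarrow> nat \<Rightarrow> tensor" where
  "hor_slice Y i = (\<lambda>r c k. Y i c k)"

text \<open>Sampling tensor S (n x tau x l) for index sequence idx : {0..<tau} -> {0..<n}.\<close>
definition samp_S :: "(nat \<Rightarrow> nat) \<Rightarrow> tensor" where
  "samp_S idx = (\<lambda>i t k. if k = 0 \<and> i = idx t then 1 else 0)"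

definition samp_D :: "nat \<Rightarrow> (nat \<Rightarrow> real) \<Rightarrow> (nat \<Rightarrow> nat) \<Rightarrow> tensor" where
  "samp_D \<tau> \<pi> idx = (\<lambda>t t' k. if k = 0 \<and> t = t' then 1 / sqrt (real \<tau> * \<pi> (idx t)) else 0)"

text \<open>Expectation over tau i.i.d. draws (with replacement) from distribution pi on {0..<n}.\<close>
definition samp_expect :: "nat \<Rightarrow> nat \<Rightarrow> (nat \<Rightarrow> real) \<Rightarrow> ((nat \<Rightarrow> nat) \<Rightarrow> real) \<Rightarrow> real" where
  "samp_expect n \<tau> \<pi> f =
     (\<Sum>idx \<in> PiE {..<\<tau>} (\<lambda>_. {..<n}). (\<Prod>t<\<tau>. \<pi> (idx t)) * f idx)"

end

theory Submission
  imports Defs "HOL-Analysis.Convex"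
begin

text \<open>
  Write \<open>X * Y\<close> as the sum of the terms \<open>A\<^sub>j = X(:,j,:) * Y(j,:,:)\<close>. Since \<open>S\<close>, \<open>D\<close> and
  \<open>S\<^sup>T\<close> live on the first frontal slice, the sampled product is the average
  \<open>(1/\<tau>) \<Sum>\<^sub>t A\<^bsub>i\<^sub>t\<^esub> / \<pi>\<^bsub>i\<^sub>t\<^esub>\<close> of \<open>\<tau>\<close> independent unbiased estimators of \<open>X * Y\<close>.
  Entrywise, its expected squared error is the variance of one estimator divided by \<open>\<tau>\<close>, hence
  at most \<open>(1/\<tau>) \<Sum>\<^sub>j \<parallel>A\<^sub>j\<parallel>\<^sup>2 / \<pi>\<^sub>j\<close>. Cauchy-Schwarz over the circular convolution in the
  third mode gives \<open>\<parallel>A\<^sub>j\<parallel>\<^sup>2 \<le> l \<parallel>X(:,j,:)\<parallel>\<^sup>2 \<parallel>Y(j,:,:)\<parallel>\<^sup>2\<close>, and either sampling condition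
  bounds \<open>\<Sum>\<^sub>j \<parallel>X(:,j,:)\<parallel>\<^sup>2 \<parallel>Y(j,:,:)\<parallel>\<^sup>2 / \<pi>\<^sub>j\<close> by \<open>\<parallel>X\<parallel>\<^sup>2 \<parallel>Y\<parallel>\<^sup>2 / \<beta>\<close> (for the first one
  via Cauchy-Schwarz once more).
\<close>

lemma fro_power2: "(fro a b l A)\<^sup>2 = fro_sq a b l A"
  unfolding fro_def fro_sq_def by (simp add: sum_nonneg)

lemma fro_sq_eq_sum_lat_slice: "fro_sq m n l X = (\<Sum>j<n. fro_sq m 1 l (lat_slice X j))"
  unfolding fro_sq_def lat_slice_def by (simp add: sum.swap[of _ "{..<m}" "{..<n}"])

lemma fro_sq_eq_sum_hor_slice: "fro_sq n p l Y = (\<Sum>j<n. fro_sq 1 p l (hor_slice Y j))"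
  unfolding fro_sq_def hor_slice_def by simp

lemma fro_sq_cong:
  assumes "\<And>i j k. i < a \<Longrightarrow> j < b \<Longrightarrow> k < l \<Longrightarrow> A i j k = B i j k"
  shows "fro_sq a b l A = fro_sq a b l B"
  unfolding fro_sq_def using assms by (intro sum.cong refl) auto

lemma mod_reflect_involutive:
  fixes k l s :: nat
  assumes "k < l" "s < l"
  shows "(k + l - (k + l - s) mod l) mod l = s"
proof (cases "s \<le> k")
  case True
  have "(k + l - s) mod l = (k - s + l) mod l" using True by (simp add: add.commute)
  also have "\<dots> = k - s" using assms(1) by simp
  finally have "k + l - (k + l - s) mod l = s + l" using True assms(1) by simp
  then show ?thesis using assms(2) by simp
next
  case False
  then have "(k + l - s) mod l = k + l - s" using assms(2) by simp
  then have "k + l - (k + l - s) mod l = s" using assms(2) by simp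
  then show ?thesis using assms(2) by simp
qed

lemma sum_mod_reflect:
  fixes g :: "nat \<Rightarrow> 'a::comm_monoid_add"
  assumes "k < l"
  shows "(\<Sum>s<l. g ((k + l - s) mod l)) = (\<Sum>s<l. g s)"
  by (rule sum.reindex_bij_witness[where i="\<lambda>s. (k + l - s) mod l" and j="\<lambda>s. (k + l - s) mod l"])
    (use assms mod_reflect_involutive in auto)

lemma tprod_power2_le:
  assumes "k < l"
  shows "(tprod l q A B i j k)\<^sup>2
    \<le> (\<Sum>c<q. \<Sum>s<l. (A i c s)\<^sup>2) * (\<Sum>c<q. \<Sum>s<l. (B c j s)\<^sup>2)"
proof -
  let ?I = "{..<q} \<times> {..<l}"
  have "(tprod l q A B i j k)\<^sup>2
      = (\<Sum>(c, s)\<in>?I. A i c ((k + l - s) mod l) * B c j s)\<^sup>2"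
    unfolding tprod_def by (simp add: sum.cartesian_product)
  also have "\<dots> \<le> (\<Sum>(c, s)\<in>?I. (A i c ((k + l - s) mod l))\<^sup>2) * (\<Sum>(c, s)\<in>?I. (B c j s)\<^sup>2)"
    using Cauchy_Schwarz_ineq_sum[of "\<lambda>(c, s). A i c ((k + l - s) mod l)" "\<lambda>(c, s). B c j s" ?I]
    by (simp add: case_prod_unfold)
  also have "\<dots> = (\<Sum>c<q. \<Sum>s<l. (A i c s)\<^sup>2) * (\<Sum>c<q. \<Sum>s<l. (B c j s)\<^sup>2)"
    using sum_mod_reflect[OF assms, of "\<lambda>s. (A i _ s)\<^sup>2"]
    by (simp add: sum.cartesian_product[symmetric])
  finally show ?thesis .
qed

lemma fro_sq_tprod_le: "fro_sq a b l (tprod l q A B) \<le> real l * fro_sq a q l A * fro_sq q b l B"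
proof -
  define \<alpha> where "\<alpha> i = (\<Sum>c<q. \<Sum>s<l. (A i c s)\<^sup>2)" for i
  define \<beta> where "\<beta> j = (\<Sum>c<q. \<Sum>s<l. (B c j s)\<^sup>2)" for j
  have "fro_sq a b l (tprod l q A B) \<le> (\<Sum>i<a. \<Sum>j<b. \<Sum>k<l. \<alpha> i * \<beta> j)"
    unfolding fro_sq_def \<alpha>_def \<beta>_def by (intro sum_mono tprod_power2_le) simp
  also have "\<dots> = real l * (\<Sum>i<a. \<alpha> i) * (\<Sum>j<b. \<beta> j)"
    by (simp add: sum_product sum_distrib_left mult_ac)
  also have "\<dots> = real l * fro_sq a q l A * fro_sq q b l B"
    unfolding fro_sq_def \<alpha>_def \<beta>_def by (simp add: sum.swap[of _ "{..<b}"])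
  finally show ?thesis .
qed

lemma tprod_eq_sum_lat_hor:
  "tprod l n X Y i c k = (\<Sum>j<n. tprod l 1 (lat_slice X j) (hor_slice Y j) i c k)"
  unfolding tprod_def lat_slice_def hor_slice_def by simp

lemma tprod_first_slice_right:
  assumes "k < l" and B0: "\<And>c j s. 0 < s \<Longrightarrow> s < l \<Longrightarrow> B c j s = 0"
  shows "tprod l q A B i j k = (\<Sum>c<q. A i c k * B c j 0)"
  unfolding tprod_def
proof (rule sum.cong[OF refl])
  fix c
  have "(\<Sum>s\<in>{..<l} - {0}. A i c ((k + l - s) mod l) * B c j s) = 0"
    using B0 by (intro sum.neutral) auto
  then show "(\<Sum>s<l. A i c ((k + l - s) mod l) * B c j s) = A i c k * B c j 0"
    using assms(1) by (simp add: sum.remove[of "{..<l}" 0])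
qed

lemma tprod_samp_S:
  assumes "k < l" "idx t < n"
  shows "tprod l n X (samp_S idx) i t k = X i (idx t) k"
proof -
  have "tprod l n X (samp_S idx) i t k = (\<Sum>c<n. X i c k * samp_S idx c t 0)"
    by (rule tprod_first_slice_right) (auto simp: assms samp_S_def)
  also have "\<dots> = (\<Sum>c<n. if c = idx t then X i c k else 0)"
    by (rule sum.cong) (auto simp: samp_S_def)
  finally show ?thesis using assms(2) by simp
qed

lemma tprod_samp_D:
  assumes "k < l" "t < \<tau>"
  shows "tprod l \<tau> Z (samp_D \<tau> \<pi> idx) i t k = Z i t k / sqrt (real \<tau> * \<pi> (idx t))"
proof -
  have "tprod l \<tau> Z (samp_D \<tau> \<pi> idx) i t k = (\<Sum>c<\<tau>. Z i c k * samp_D \<tau> \<pi> idx c t 0)"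
    by (rule tprod_first_slice_right) (auto simp: assms samp_D_def)
  also have "\<dots> = (\<Sum>c<\<tau>. if c = t then Z i c k / sqrt (real \<tau> * \<pi> (idx c)) else 0)"
    by (rule sum.cong) (auto simp: samp_D_def)
  finally show ?thesis using assms(2) by simp
qed

lemma tprod_ttrans_samp_S:
  assumes "k < l"
  shows "tprod l \<tau> Z (ttrans l (samp_S idx)) i j k = (\<Sum>t<\<tau>. if j = idx t then Z i t k else 0)"
  using assms by (subst tprod_first_slice_right) (auto simp: ttrans_def samp_S_def intro!: sum.cong)

lemma sampled_tprod_eq_importance_sum:
  assumes "k < l" and idx: "\<And>t. t < \<tau> \<Longrightarrow> idx t < n" and \<pi>: "\<And>i. i < n \<Longrightarrow> 0 \<le> \<pi> i"
  shows "tprod l n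
           (tprod l \<tau>
              (tprod l \<tau> (tprod l \<tau> (tprod l n X (samp_S idx)) (samp_D \<tau> \<pi> idx)) (samp_D \<tau> \<pi> idx))
              (ttrans l (samp_S idx)))
           Y i c k
       = (\<Sum>t<\<tau>. tprod l 1 (lat_slice X (idx t)) (hor_slice Y (idx t)) i c k / (real \<tau> * \<pi> (idx t)))"
proof -
  define W where "W = tprod l \<tau> (tprod l \<tau> (tprod l n X (samp_S idx)) (samp_D \<tau> \<pi> idx)) (samp_D \<tau> \<pi> idx)"
  have W: "W i t k' = X i (idx t) k' / (real \<tau> * \<pi> (idx t))" if "k' < l" "t < \<tau>" for t k'
    using that idx[OF that(2)] \<pi>[OF idx[OF that(2)]]
    by (simp add: W_def tprod_samp_D tprod_samp_S real_sqrt_mult[symmetric])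
  have "tprod l n (tprod l \<tau> W (ttrans l (samp_S idx))) Y i c k
      = (\<Sum>j<n. \<Sum>s<l. \<Sum>t<\<tau>. if j = idx t then W i t ((k + l - s) mod l) * Y j c s else 0)"
    using \<open>k < l\<close>
    by (simp add: tprod_def[of l n _ Y] tprod_ttrans_samp_S sum_distrib_right
        if_distrib[where f="\<lambda>x. x * _"] cong: if_cong)
  also have "\<dots> = (\<Sum>s<l. \<Sum>t<\<tau>. \<Sum>j<n. if j = idx t then W i t ((k + l - s) mod l) * Y j c s else 0)"
    by (subst sum.swap, rule sum.cong[OF refl], rule sum.swap)
  also have "\<dots> = (\<Sum>t<\<tau>. \<Sum>s<l. W i t ((k + l - s) mod l) * Y (idx t) c s)"
    by (subst sum.swap, intro sum.cong refl) (simp add: idx)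
  also have "\<dots> = (\<Sum>t<\<tau>. (\<Sum>s<l. X i (idx t) ((k + l - s) mod l) * Y (idx t) c s) / (real \<tau> * \<pi> (idx t)))"
    using \<open>k < l\<close> by (simp add: W sum_divide_distrib)
  also have "\<dots> = (\<Sum>t<\<tau>. tprod l 1 (lat_slice X (idx t)) (hor_slice Y (idx t)) i c k / (real \<tau> * \<pi> (idx t)))"
    by (simp add: tprod_def lat_slice_def hor_slice_def)
  finally show ?thesis
    unfolding W_def .
qed

lemma fro_power2_sampled_product_error:
  assumes "\<forall>i<n. 0 \<le> \<pi> i" "idx \<in> PiE {..<\<tau>} (\<lambda>_. {..<n})"
  shows "(fro m p l
           (\<lambda>i j k. tprod l n X Y i j k
              - tprod l n
                  (tprod l \<tau>
                     (tprod l \<tau> (tprod l \<tau> (tprod l n X (samp_S idx)) (samp_D \<tau> \<pi> idx)) (samp_D \<tau> \<pi> idx))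
                     (ttrans l (samp_S idx)))
                  Y i j k))\<^sup>2
    = fro_sq m p l (\<lambda>i j k. (\<Sum>r<n. tprod l 1 (lat_slice X r) (hor_slice Y r) i j k)
        - (\<Sum>t<\<tau>. tprod l 1 (lat_slice X (idx t)) (hor_slice Y (idx t)) i j k / (real \<tau> * \<pi> (idx t))))"
  unfolding fro_power2 using assms
  by (intro fro_sq_cong) (simp add: tprod_eq_sum_lat_hor[of l n X Y] sampled_tprod_eq_importance_sum PiE_iff)

lemma samp_expect_cong:
  assumes "\<And>idx. idx \<in> PiE {..<\<tau>} (\<lambda>_. {..<n}) \<Longrightarrow> f idx = g idx"
  shows "samp_expect n \<tau> \<pi> f = samp_expect n \<tau> \<pi> g"
  unfolding samp_expect_def using assms by (intro sum.cong) auto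

lemma samp_expect_sum:
  "samp_expect n \<tau> \<pi> (\<lambda>idx. \<Sum>x\<in>S. f x idx) = (\<Sum>x\<in>S. samp_expect n \<tau> \<pi> (f x))"
  unfolding samp_expect_def by (simp add: sum_distrib_left) (rule sum.swap)

lemma samp_expect_cmult:
  "samp_expect n \<tau> \<pi> (\<lambda>idx. c * f idx) = c * samp_expect n \<tau> \<pi> f"
  unfolding samp_expect_def by (simp add: sum_distrib_left mult_ac)

lemma samp_expect_prod:
  "samp_expect n \<tau> \<pi> (\<lambda>idx. \<Prod>t<\<tau>. h t (idx t)) = (\<Prod>t<\<tau>. \<Sum>j<n. \<pi> j * h t j)"
  unfolding samp_expect_def by (subst prod_sum_PiE) (auto simp: prod.distrib)

lemma samp_expect_coord:
  assumes "t < \<tau>" "(\<Sum>i<n. \<pi> i) = 1"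
  shows "samp_expect n \<tau> \<pi> (\<lambda>idx. f (idx t)) = (\<Sum>j<n. \<pi> j * f j)"
proof -
  have "samp_expect n \<tau> \<pi> (\<lambda>idx. f (idx t))
      = samp_expect n \<tau> \<pi> (\<lambda>idx. \<Prod>s<\<tau>. if s = t then f (idx s) else 1)"
    using assms(1) by simp
  also have "\<dots> = (\<Prod>s<\<tau>. if s = t then \<Sum>j<n. \<pi> j * f j else 1)"
    by (subst samp_expect_prod, rule prod.cong[OF refl]) (use assms(2) in auto)
  finally show ?thesis using assms(1) by simp
qed

lemma samp_expect_coord_pair:
  assumes "t < \<tau>" "t' < \<tau>" "t \<noteq> t'" "(\<Sum>i<n. \<pi> i) = 1"
  shows "samp_expect n \<tau> \<pi> (\<lambda>idx. f (idx t) * g (idx t')) = (\<Sum>j<n. \<pi> j * f j) * (\<Sum>j<n. \<pi> j * g j)"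
proof -
  have "samp_expect n \<tau> \<pi> (\<lambda>idx. f (idx t) * g (idx t'))
      = samp_expect n \<tau> \<pi> (\<lambda>idx. \<Prod>s<\<tau>. (if s = t then f (idx s) else 1) * (if s = t' then g (idx s) else 1))"
    using assms(1-3) by (simp add: prod.distrib)
  also have "\<dots> = (\<Prod>s<\<tau>. (if s = t then \<Sum>j<n. \<pi> j * f j else 1) * (if s = t' then \<Sum>j<n. \<pi> j * g j else 1))"
    by (subst samp_expect_prod, rule prod.cong[OF refl]) (use assms(3,4) in auto)
  finally show ?thesis using assms(1-3) by (simp add: prod.distrib)
qed

lemma samp_expect_importance_error_sq:
  fixes a :: "nat \<Rightarrow> real"
  assumes "0 < \<tau>" and pos: "\<forall>i<n. \<pi> i > 0" and sum1: "(\<Sum>i<n. \<pi> i) = 1"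
  shows "samp_expect n \<tau> \<pi> (\<lambda>idx. ((\<Sum>j<n. a j) - (\<Sum>t<\<tau>. a (idx t) / (real \<tau> * \<pi> (idx t))))\<^sup>2)
    = ((\<Sum>j<n. (a j)\<^sup>2 / \<pi> j) - (\<Sum>j<n. a j)\<^sup>2) / real \<tau>"
proof -
  define B where "B = (\<Sum>j<n. a j)"
  define V where "V j = B - a j / \<pi> j" for j
  have mean: "(\<Sum>j<n. \<pi> j * V j) = 0"
  proof -
    have "(\<Sum>j<n. \<pi> j * V j) = (\<Sum>j<n. \<pi> j * B - a j)"
      unfolding V_def using pos by (intro sum.cong refl) (auto simp: field_simps)
    also have "\<dots> = 0" by (simp add: sum_subtractf sum_distrib_right[symmetric] sum1 B_def)
    finally show ?thesis .
  qed
  have var: "(\<Sum>j<n. \<pi> j * (V j)\<^sup>2) = (\<Sum>j<n. (a j)\<^sup>2 / \<pi> j) - B\<^sup>2"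
  proof -
    have "(\<Sum>j<n. \<pi> j * (V j)\<^sup>2) = (\<Sum>j<n. \<pi> j * B\<^sup>2 - 2 * B * a j + (a j)\<^sup>2 / \<pi> j)"
      unfolding V_def using pos by (intro sum.cong refl) (auto simp: power2_eq_square field_simps)
    also have "\<dots> = (\<Sum>j<n. (a j)\<^sup>2 / \<pi> j) - B\<^sup>2"
      by (simp add: sum.distrib sum_subtractf sum_distrib_right[symmetric] sum_distrib_left[symmetric]
          sum1 B_def power2_eq_square)
    finally show ?thesis .
  qed
  have error: "(B - (\<Sum>t<\<tau>. a (idx t) / (real \<tau> * \<pi> (idx t))))\<^sup>2
      = (1 / real \<tau>)\<^sup>2 * (\<Sum>t<\<tau>. \<Sum>t'<\<tau>. V (idx t) * V (idx t'))" for idx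
  proof -
    have "(\<Sum>t<\<tau>. a (idx t) / (real \<tau> * \<pi> (idx t))) = (\<Sum>t<\<tau>. a (idx t) / \<pi> (idx t)) / real \<tau>"
      by (simp add: sum_divide_distrib divide_divide_eq_left mult.commute)
    then have "B - (\<Sum>t<\<tau>. a (idx t) / (real \<tau> * \<pi> (idx t))) = 1 / real \<tau> * (\<Sum>t<\<tau>. V (idx t))"
      using \<open>0 < \<tau>\<close> by (simp add: V_def sum_subtractf field_simps)
    then show ?thesis by (simp add: power_mult_distrib power2_eq_square sum_product)
  qed
  \<comment> \<open>Distinct draws are independent and \<open>V\<close> has mean zero, so only diagonal terms survive.\<close>
  have pair: "samp_expect n \<tau> \<pi> (\<lambda>idx. V (idx t) * V (idx t'))
      = (if t = t' then \<Sum>j<n. \<pi> j * (V j)\<^sup>2 else 0)" if "t < \<tau>" "t' < \<tau>" for t t'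
    using samp_expect_coord[OF that(1) sum1, of "\<lambda>j. V j * V j"]
      samp_expect_coord_pair[OF that _ sum1, of V V] mean
    by (auto simp: power2_eq_square)
  have "samp_expect n \<tau> \<pi> (\<lambda>idx. (B - (\<Sum>t<\<tau>. a (idx t) / (real \<tau> * \<pi> (idx t))))\<^sup>2)
      = (1 / real \<tau>)\<^sup>2 * (\<Sum>t<\<tau>. \<Sum>t'<\<tau>. samp_expect n \<tau> \<pi> (\<lambda>idx. V (idx t) * V (idx t')))"
    by (simp only: error samp_expect_cmult samp_expect_sum)
  also have "\<dots> = (1 / real \<tau>)\<^sup>2 * (\<Sum>t<\<tau>. \<Sum>t'<\<tau>. if t = t' then \<Sum>j<n. \<pi> j * (V j)\<^sup>2 else 0)"
    by (intro arg_cong[where f="\<lambda>x. _ * x"] sum.cong refl) (simp add: pair)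
  also have "\<dots> = (\<Sum>j<n. \<pi> j * (V j)\<^sup>2) / real \<tau>"
    using \<open>0 < \<tau>\<close> by (simp add: power2_eq_square)
  finally show ?thesis unfolding var B_def .
qed

lemma samp_expect_fro_sq_importance_error_le:
  fixes A :: "nat \<Rightarrow> tensor"
  assumes "0 < \<tau>" "\<forall>i<n. \<pi> i > 0" "(\<Sum>i<n. \<pi> i) = 1"
  shows "samp_expect n \<tau> \<pi>
      (\<lambda>idx. fro_sq a b l (\<lambda>i j k. (\<Sum>r<n. A r i j k) - (\<Sum>t<\<tau>. A (idx t) i j k / (real \<tau> * \<pi> (idx t)))))
    \<le> (\<Sum>r<n. fro_sq a b l (A r) / \<pi> r) / real \<tau>"
proof -
  note entry = samp_expect_importance_error_sq[OF assms, of "\<lambda>r. A r i j k" for i j k]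
  have "samp_expect n \<tau> \<pi>
      (\<lambda>idx. fro_sq a b l (\<lambda>i j k. (\<Sum>r<n. A r i j k) - (\<Sum>t<\<tau>. A (idx t) i j k / (real \<tau> * \<pi> (idx t)))))
    = (\<Sum>i<a. \<Sum>j<b. \<Sum>k<l. ((\<Sum>r<n. (A r i j k)\<^sup>2 / \<pi> r) - (\<Sum>r<n. A r i j k)\<^sup>2) / real \<tau>)"
    unfolding fro_sq_def samp_expect_sum entry ..
  also have "\<dots> \<le> (\<Sum>i<a. \<Sum>j<b. \<Sum>k<l. (\<Sum>r<n. (A r i j k)\<^sup>2 / \<pi> r) / real \<tau>)"
    by (intro sum_mono divide_right_mono) auto
  also have "\<dots> = (\<Sum>r<n. fro_sq a b l (A r) / \<pi> r) / real \<tau>"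
    unfolding fro_sq_def by (simp add: sum_divide_distrib sum.swap[of _ "{..<n}"])
  finally show ?thesis .
qed

lemma sum_mult_div_le_of_prob_ge_share:
  fixes a b \<pi> :: "nat \<Rightarrow> real"
  assumes a: "\<forall>j<n. a j \<ge> 0" and b: "\<forall>j<n. b j \<ge> 0" and pos: "\<forall>j<n. \<pi> j > 0" and "\<beta> > 0"
    and share: "\<forall>i<n. \<pi> i \<ge> \<beta> * a i / (\<Sum>j<n. a j)"
  shows "(\<Sum>j<n. a j * b j / \<pi> j) \<le> (\<Sum>j<n. a j) * (\<Sum>j<n. b j) / \<beta>"
proof (cases "(\<Sum>j<n. a j) = 0")
  case True
  then have "\<forall>j<n. a j = 0" using a sum_nonneg_eq_0_iff[of "{..<n}" a] by auto
  then show ?thesis using True by simp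
next
  case False
  define S where "S = (\<Sum>j<n. a j)"
  have "S > 0" using False a unfolding S_def by (metis order_le_less sum_nonneg lessThan_iff)
  have "a j * b j / \<pi> j \<le> S * b j / \<beta>" if "j < n" for j
  proof -
    have "\<beta> * a j \<le> \<pi> j * S" using share that \<open>S > 0\<close> by (simp add: S_def divide_le_eq mult.commute)
    then have "a j / \<pi> j \<le> S / \<beta>"
      using pos that \<open>\<beta> > 0\<close> by (simp add: divide_le_eq le_divide_eq mult_ac)
    then show ?thesis using b that mult_right_mono[of "a j / \<pi> j" "S / \<beta>" "b j"] by (simp add: mult_ac)
  qed
  then have "(\<Sum>j<n. a j * b j / \<pi> j) \<le> (\<Sum>j<n. S * b j / \<beta>)" by (intro sum_mono) simp
  also have "\<dots> = S * (\<Sum>j<n. b j) / \<beta>" by (simp add: sum_divide_distrib[symmetric] sum_distrib_left)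
  finally show ?thesis unfolding S_def .
qed

lemma sum_mult_div_le_of_prob_ge_sqrt_share:
  fixes a b \<pi> :: "nat \<Rightarrow> real"
  assumes a: "\<forall>j<n. a j \<ge> 0" and b: "\<forall>j<n. b j \<ge> 0" and pos: "\<forall>j<n. \<pi> j > 0" and "\<beta> > 0"
    and share: "\<forall>i<n. \<pi> i \<ge> \<beta> * (sqrt (a i) * sqrt (b i)) / (\<Sum>j<n. sqrt (a j) * sqrt (b j))"
  shows "(\<Sum>j<n. a j * b j / \<pi> j) \<le> (\<Sum>j<n. a j) * (\<Sum>j<n. b j) / \<beta>"
proof -
  define f where "f j = sqrt (a j) * sqrt (b j)" for j
  have f0: "\<forall>j<n. f j \<ge> 0" unfolding f_def using a b by simp
  have "(\<Sum>j<n. a j * b j / \<pi> j) = (\<Sum>j<n. f j * f j / \<pi> j)"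
    using a b by (intro sum.cong refl) (simp add: f_def power2_eq_square[symmetric] power_mult_distrib)
  also have "\<dots> \<le> (\<Sum>j<n. f j) * (\<Sum>j<n. f j) / \<beta>"
    using share by (intro sum_mult_div_le_of_prob_ge_share[OF f0 f0 pos \<open>\<beta> > 0\<close>]) (simp add: f_def)
  also have "\<dots> \<le> (\<Sum>j<n. a j) * (\<Sum>j<n. b j) / \<beta>"
  proof (rule divide_right_mono)
    have "(\<Sum>j<n. f j)\<^sup>2 \<le> (\<Sum>j<n. (sqrt (a j))\<^sup>2) * (\<Sum>j<n. (sqrt (b j))\<^sup>2)"
      unfolding f_def by (rule Cauchy_Schwarz_ineq_sum)
    then show "(\<Sum>j<n. f j) * (\<Sum>j<n. f j) \<le> (\<Sum>j<n. a j) * (\<Sum>j<n. b j)"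
      using a b by (simp add: power2_eq_square)
  qed (use \<open>\<beta> > 0\<close> in simp)
  finally show ?thesis .
qed

theorem mainTheorem1:
  fixes m n p l \<tau> :: nat and X Y :: tensor and \<pi> :: "nat \<Rightarrow> real" and \<beta> :: real
  assumes l_pos: "l \<ge> 1"
    and tau_pos: "\<tau> \<ge> 1"
    and pi_pos: "\<forall>i<n. \<pi> i > 0"
    and pi_sum: "(\<Sum>i<n. \<pi> i) = 1"
    and beta: "0 < \<beta>" "\<beta> \<le> 1"
    and prob_cond:
      "(\<forall>i<n. \<pi> i \<ge> \<beta> * (fro m 1 l (lat_slice X i) * fro 1 p l (hor_slice Y i))
                     / (\<Sum>j<n. fro m 1 l (lat_slice X j) * fro 1 p l (hor_slice Y j)))
       \<or> (\<forall>i<n. \<pi> i \<ge> \<beta> * (fro m 1 l (lat_slice X i))^2 / (fro m n l X)^2)"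
  shows "samp_expect n \<tau> \<pi>
           (\<lambda>idx. (fro m p l
              (\<lambda>i j k. tprod l n X Y i j k
                 - tprod l n
                     (tprod l \<tau>
                        (tprod l \<tau> (tprod l \<tau> (tprod l n X (samp_S idx)) (samp_D \<tau> \<pi> idx))
                           (samp_D \<tau> \<pi> idx))
                        (ttrans l (samp_S idx)))
                     Y i j k))^2)
         \<le> real l / (\<beta> * real \<tau>) * (fro m n l X)^2 * (fro n p l Y)^2"
proof -
  define Fx where "Fx j = fro_sq m 1 l (lat_slice X j)" for j
  define Fy where "Fy j = fro_sq 1 p l (hor_slice Y j)" for j
  have Fx0: "\<forall>j<n. Fx j \<ge> 0" and Fy0: "\<forall>j<n. Fy j \<ge> 0"
    unfolding Fx_def Fy_def fro_sq_def by (simp_all add: sum_nonneg)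
  have pi_nonneg: "\<forall>i<n. 0 \<le> \<pi> i" using pi_pos by (simp add: less_imp_le)
  have "samp_expect n \<tau> \<pi> (\<lambda>idx. fro_sq m p l (\<lambda>i j k. (\<Sum>r<n. tprod l 1 (lat_slice X r) (hor_slice Y r) i j k)
        - (\<Sum>t<\<tau>. tprod l 1 (lat_slice X (idx t)) (hor_slice Y (idx t)) i j k / (real \<tau> * \<pi> (idx t)))))
      \<le> (\<Sum>j<n. fro_sq m p l (tprod l 1 (lat_slice X j) (hor_slice Y j)) / \<pi> j) / real \<tau>"
    using tau_pos pi_pos pi_sum by (intro samp_expect_fro_sq_importance_error_le) auto
  also have "\<dots> \<le> (\<Sum>j<n. real l * Fx j * Fy j / \<pi> j) / real \<tau>"
    unfolding Fx_def Fy_def using pi_nonneg by (intro divide_right_mono sum_mono fro_sq_tprod_le) auto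
  also have "\<dots> = real l / real \<tau> * (\<Sum>j<n. Fx j * Fy j / \<pi> j)"
    unfolding sum_divide_distrib sum_distrib_left by (intro sum.cong refl) (simp add: mult_ac)
  also have "\<dots> \<le> real l / real \<tau> * ((\<Sum>j<n. Fx j) * (\<Sum>j<n. Fy j) / \<beta>)"
  proof (rule mult_left_mono)
    from prob_cond show "(\<Sum>j<n. Fx j * Fy j / \<pi> j) \<le> (\<Sum>j<n. Fx j) * (\<Sum>j<n. Fy j) / \<beta>"
      unfolding fro_power2 fro_sq_eq_sum_lat_slice[of m n l X]
      unfolding fro_def Fx_def[symmetric] Fy_def[symmetric]
      using sum_mult_div_le_of_prob_ge_sqrt_share[OF Fx0 Fy0 pi_pos beta(1)]
        sum_mult_div_le_of_prob_ge_share[OF Fx0 Fy0 pi_pos beta(1)]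
      by auto
  qed simp
  also have "\<dots> = real l / (\<beta> * real \<tau>) * (fro m n l X)\<^sup>2 * (fro n p l Y)\<^sup>2"
    by (simp add: fro_power2 fro_sq_eq_sum_lat_slice[of m n l X] fro_sq_eq_sum_hor_slice[of n p l Y]
        Fx_def Fy_def mult_ac)
  finally show ?thesis
    by (subst samp_expect_cong[OF fro_power2_sampled_product_error[OF pi_nonneg]])
qed

end
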